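(* Let $\Omega,\widetilde\Omega$ be Polish spaces and $\mathcal{P}:\Omega\twoheadrightarrow\mathfrak{P}(\widetilde\Omega)$ a non-empty-valued random set whose graph $\{(\omega,P):P\in\mathcal{P}(\omega)\}$ is analytic. Let $X:\Omega\times\widetilde\Omega\to\mathbb{R}^d$ be Borel-measurable with $\mathrm{supp}_{\mathcal{P}}X(\omega)\neq\emptyset$ for all $\omega\in\Omega$. Fix $\omega\in\Omega$ and let $h:\Omega\times\mathbb{R}^d\to\mathbb{R}$ be upper semi-analytic and such that $h(\omega,\cdot)$ is lower semi-continuous. Then $$\mathrm{ess\,sup}_{\mathcal{P}}\,h(X)(\omega)=\sup_{x\in\mathrm{supp}_{\mathcal{P}}X(\omega)}h(\omega,x),$$ where $h(X)(\omega,\widetilde\omega):=h(\omega,X(\omega,\widetilde\omega))$.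
   Context: $\mathfrak{P}(\widetilde\Omega)$ is the set of Borel probability measures on $\widetilde\Omega$ with the weak topology. A property holds $\mathcal{P}(\omega)$-q.s. if it holds outside a set contained in a Borel set that is null for every $P\in\mathcal{P}(\omega)$. $\mathrm{supp}_{\mathcal{P}}X(\omega):=\bigcap\{F\subset\mathbb{R}^d\text{ closed}:\ P(X(\omega,\cdot)\in F)=1\ \forall P\in\mathcal{P}(\omega)\}$. A function is upper semi-analytic if its strict upper level sets $\{h>c\}$ are analytic. For $Z:\Omega\times\widetilde\Omega\to\mathbb{R}$, $\mathrm{ess\,sup}_{\mathcal{P}}Z(\omega)\in[-\infty,+\infty]$ denotes the quasi-sure essential supremum: the value such that, for all $y\in\mathbb{R}$, $y\ge Z(\omega,\cdot)$ $\mathcal{P}(\omega)$-q.s. if and only if $y\ge \mathrm{ess\,sup}_{\mathcal{P}}Z(\omega)$ (and $\mathrm{ess\,sup}_{\mathcal{P}}Z(\omega)\ge Z(\omega,\cdot)$ $\mathcal{P}(\omega)$-q.s.). *)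

theory Defs
  imports "HOL-Analysis.Analysis" "HOL-Probability.Probability"
begin

text \<open>Analytic sets: the empty set or a continuous image of the Baire space
  (nat => nat with the product topology of discrete nat).\<close>
definition analytic_in :: "'x topology \<Rightarrow> 'x set \<Rightarrow> bool" where
  "analytic_in T A \<longleftrightarrow> A \<subseteq> topspace T \<and>
     (A = {} \<or> (\<exists>f :: (nat \<Rightarrow> nat) \<Rightarrow> 'x. continuous_map euclidean T f \<and> range f = A))"

definition upper_semianalytic :: "('x::topological_space \<Rightarrow> real) \<Rightarrow> bool" where
  "upper_semianalytic h \<longleftrightarrow> (\<forall>c. analytic_in euclidean {z. c < h z})"

definition lower_semicont :: "('x::topological_space \<Rightarrow> real) \<Rightarrow> bool" where
  "lower_semicont f \<longleftrightarrow> (\<forall>c. open {x. c < f x})"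

definition probs :: "'b::topological_space measure set" where
  "probs = {P. prob_space P \<and> sets P = sets borel}"

definition weak_top :: "'b::topological_space measure topology" where
  "weak_top = subtopology
     (topology_generated_by
        {{P \<in> probs. (\<integral>w. f w \<partial>P) \<in> U} | (f :: 'b \<Rightarrow> real) U.
            continuous_on UNIV f \<and> bounded (range f) \<and> open U})
     probs"

definition qs_polar :: "'b::topological_space measure set \<Rightarrow> 'b set \<Rightarrow> bool" where
  "qs_polar Ps N \<longleftrightarrow> (\<exists>B \<in> sets borel. N \<subseteq> B \<and> (\<forall>P\<in>Ps. emeasure P B = 0))"

definition qs :: "'b::topological_space measure set \<Rightarrow> ('b \<Rightarrow> bool) \<Rightarrow> bool" where
  "qs Ps Q \<longleftrightarrow> qs_polar Ps {w. \<not> Q w}"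

definition qs_ess_sup :: "'b::topological_space measure set \<Rightarrow> ('b \<Rightarrow> real) \<Rightarrow> ereal" where
  "qs_ess_sup Ps Z = Inf {y :: ereal. qs Ps (\<lambda>w. ereal (Z w) \<le> y)}"

definition qs_supp :: "'b::topological_space measure set \<Rightarrow> ('b \<Rightarrow> 'c::topological_space) \<Rightarrow> 'c set" where
  "qs_supp Ps Y = \<Inter> {F. closed F \<and> (\<forall>P\<in>Ps. measure P {w. Y w \<in> F} = 1)}"

end

theory Submission
  imports Defs
begin

text \<open>The quasi-sure support \<open>S\<close> of \<open>Y\<close> is the smallest closed set with \<open>Y \<in> S\<close> quasi-surely:
  its complement is a union of open \<open>\<P>\<close>-polar preimages, and by Lindelof countably many of
  them suffice. Hence \<open>g(Y) \<le> sup\<^sub>S g\<close> quasi-surely, which bounds the essential supremum from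
  above. Conversely, if \<open>g(Y) \<le> y\<close> quasi-surely and \<open>g\<close> is lower semicontinuous, then
  \<open>{g \<le> y}\<close> is a closed set containing \<open>Y\<close> quasi-surely, so it contains \<open>S\<close> and \<open>sup\<^sub>S g \<le> y\<close>.
  Neither direction needs the analyticity hypotheses.\<close>

lemma probsD:
  assumes "P \<in> probs"
  shows "prob_space P" "sets P = sets borel" "space P = UNIV"
  using assms sets_eq_imp_space_eq[of P borel] unfolding probs_def by auto

lemma probs_measure_vimage_eq_1_iff:
  assumes P: "P \<in> probs" and Y: "Y \<in> borel_measurable borel" and A: "A \<in> sets borel"
  shows "measure P {w. Y w \<in> A} = 1 \<longleftrightarrow> {w. Y w \<notin> A} \<in> null_sets P"
proof -
  interpret prob_space P using probsD(1)[OF P] .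
  have in_sets: "{w. Y w \<in> A} \<in> events"
    using measurable_sets[OF Y A] probsD(2,3)[OF P] by (simp add: vimage_def)
  have compl: "{w. Y w \<notin> A} = space P - {w. Y w \<in> A}"
    using probsD(3)[OF P] by auto
  show ?thesis
    unfolding compl using in_sets prob_compl[OF in_sets]
    by (simp add: null_sets_def emeasure_eq_measure)
qed

lemma qs_mono: "qs Ps Q \<Longrightarrow> (\<And>w. Q w \<Longrightarrow> R w) \<Longrightarrow> qs Ps R"
  unfolding qs_def qs_polar_def by blast

lemma qs_vimage_iff_measure_eq_1:
  assumes Ps: "Ps \<subseteq> probs" and Y: "Y \<in> borel_measurable borel" and A: "A \<in> sets borel"
  shows "qs Ps (\<lambda>w. Y w \<in> A) \<longleftrightarrow> (\<forall>P\<in>Ps. measure P {w. Y w \<in> A} = 1)"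
proof -
  have compl_borel: "{w. Y w \<notin> A} \<in> sets borel"
    using measurable_sets[OF Y sets.compl_sets[OF A]] by (simp add: vimage_def)
  have "qs Ps (\<lambda>w. Y w \<in> A) \<longleftrightarrow> (\<forall>P\<in>Ps. {w. Y w \<notin> A} \<in> null_sets P)"
  proof
    assume "qs Ps (\<lambda>w. Y w \<in> A)"
    then obtain B where B: "B \<in> sets borel" "{w. Y w \<notin> A} \<subseteq> B" "\<forall>P\<in>Ps. emeasure P B = 0"
      unfolding qs_def qs_polar_def by auto
    show "\<forall>P\<in>Ps. {w. Y w \<notin> A} \<in> null_sets P"
    proof
      fix P assume "P \<in> Ps"
      then have "sets P = sets borel" "B \<in> null_sets P"
        using Ps B(1,3) probsD(2) by (auto simp: null_sets_def)
      then show "{w. Y w \<notin> A} \<in> null_sets P"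
        using null_sets_subset[of B P] B(2) compl_borel by simp
    qed
  next
    assume "\<forall>P\<in>Ps. {w. Y w \<notin> A} \<in> null_sets P"
    then show "qs Ps (\<lambda>w. Y w \<in> A)"
      using compl_borel unfolding qs_def qs_polar_def by auto
  qed
  also have "\<dots> \<longleftrightarrow> (\<forall>P\<in>Ps. measure P {w. Y w \<in> A} = 1)"
    using probs_measure_vimage_eq_1_iff[OF _ Y A] Ps by (simp add: subset_iff)
  finally show ?thesis .
qed

lemma closed_qs_supp: "closed (qs_supp Ps Y)"
  unfolding qs_supp_def by auto

lemma qs_supp_subset:
  assumes "Ps \<subseteq> probs" "Y \<in> borel_measurable borel" "closed F" "qs Ps (\<lambda>w. Y w \<in> F)"
  shows "qs_supp Ps Y \<subseteq> F"
  using assms qs_vimage_iff_measure_eq_1[of Ps Y F] unfolding qs_supp_def by auto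

lemma qs_in_qs_supp:
  fixes Y :: "'b::topological_space \<Rightarrow> 'c::second_countable_topology"
  assumes Ps: "Ps \<subseteq> probs" and Y: "Y \<in> borel_measurable borel"
  shows "qs Ps (\<lambda>w. Y w \<in> qs_supp Ps Y)"
proof -
  define \<F> where "\<F> = {F. closed F \<and> (\<forall>P\<in>Ps. measure P {w. Y w \<in> F} = 1)}"
  obtain \<G> where \<G>: "\<G> \<subseteq> uminus ` \<F>" "countable \<G>" "\<Union>\<G> = \<Union>(uminus ` \<F>)"
    using Lindelof[of "uminus ` \<F>"] unfolding \<F>_def by auto
  have S_borel: "qs_supp Ps Y \<in> sets borel"
    using closed_qs_supp by (rule borel_closed)
  have "measure P {w. Y w \<in> qs_supp Ps Y} = 1" if P: "P \<in> Ps" for P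
  proof -
    have "{w. Y w \<notin> qs_supp Ps Y} = (\<Union>G\<in>\<G>. {w. Y w \<in> G})"
      using \<G>(3) unfolding qs_supp_def \<F>_def by blast
    also have "\<dots> \<in> null_sets P"
    proof (rule null_sets_UN'[OF \<G>(2)])
      fix G assume "G \<in> \<G>"
      then obtain F where "F \<in> \<F>" "G = - F"
        using \<G>(1) by auto
      then show "{w. Y w \<in> G} \<in> null_sets P"
        using probs_measure_vimage_eq_1_iff[of P Y F] P Ps Y unfolding \<F>_def by auto
    qed
    finally show ?thesis
      using probs_measure_vimage_eq_1_iff[OF _ Y S_borel] P Ps by blast
  qed
  then show ?thesis
    using qs_vimage_iff_measure_eq_1[OF Ps Y S_borel] by simp
qed

lemma qs_ess_sup_le: "qs Ps (\<lambda>w. ereal (Z w) \<le> y) \<Longrightarrow> qs_ess_sup Ps Z \<le> y"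
  unfolding qs_ess_sup_def by (rule Inf_lower) simp

lemma qs_ess_sup_le_SUP_qs_supp:
  fixes Y :: "'b::topological_space \<Rightarrow> 'c::second_countable_topology"
  assumes "Ps \<subseteq> probs" "Y \<in> borel_measurable borel"
  shows "qs_ess_sup Ps (\<lambda>w. g (Y w)) \<le> (SUP x\<in>qs_supp Ps Y. ereal (g x))"
proof (rule qs_ess_sup_le)
  show "qs Ps (\<lambda>w. ereal (g (Y w)) \<le> (SUP x\<in>qs_supp Ps Y. ereal (g x)))"
    using qs_in_qs_supp[OF assms] by (rule qs_mono) (rule SUP_upper)
qed

lemma lower_semicont_open_ereal_less:
  assumes "lower_semicont g"
  shows "open {x. y < ereal (g x)}"
  using assms unfolding lower_semicont_def by (cases y) simp_all

lemma SUP_qs_supp_le_qs_ess_sup: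
  assumes Ps: "Ps \<subseteq> probs" and Y: "Y \<in> borel_measurable borel" and g: "lower_semicont g"
  shows "(SUP x\<in>qs_supp Ps Y. ereal (g x)) \<le> qs_ess_sup Ps (\<lambda>w. g (Y w))"
  unfolding qs_ess_sup_def
proof (rule Inf_greatest)
  fix y assume "y \<in> {y. qs Ps (\<lambda>w. ereal (g (Y w)) \<le> y)}"
  then have "qs Ps (\<lambda>w. ereal (g (Y w)) \<le> y)"
    by simp
  then have "qs Ps (\<lambda>w. Y w \<in> - {x. y < ereal (g x)})"
    by (rule qs_mono) (simp add: not_less)
  then have "qs_supp Ps Y \<subseteq> - {x. y < ereal (g x)}"
    using qs_supp_subset[OF Ps Y] lower_semicont_open_ereal_less[OF g] by blast
  then show "(SUP x\<in>qs_supp Ps Y. ereal (g x)) \<le> y"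
    by (auto intro!: SUP_least simp: not_less)
qed

theorem proposition1:
  fixes \<P> :: "'a::polish_space \<Rightarrow> 'b::polish_space measure set"
    and X :: "'a \<times> 'b \<Rightarrow> (real ^ 'n)"
    and h :: "'a \<times> (real ^ 'n) \<Rightarrow> real"
    and \<omega> :: 'a
  assumes nonempty: "\<forall>\<omega>'. \<P> \<omega>' \<noteq> {} \<and> \<P> \<omega>' \<subseteq> probs"
    and graph_analytic: "analytic_in (prod_topology euclidean weak_top) {(\<omega>', P). P \<in> \<P> \<omega>'}"
    and X_meas: "X \<in> borel_measurable borel"
    and supp_ne: "\<forall>\<omega>'. qs_supp (\<P> \<omega>') (\<lambda>w. X (\<omega>', w)) \<noteq> {}"
    and h_usa: "upper_semianalytic h"
    and h_lsc: "lower_semicont (\<lambda>x. h (\<omega>, x))"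
  shows "qs_ess_sup (\<P> \<omega>) (\<lambda>w. h (\<omega>, X (\<omega>, w)))
           = (SUP x \<in> qs_supp (\<P> \<omega>) (\<lambda>w. X (\<omega>, w)). ereal (h (\<omega>, x)))"
proof -
  have Ps: "\<P> \<omega> \<subseteq> probs"
    using nonempty by blast
  have section_meas: "(\<lambda>w. X (\<omega>, w)) \<in> borel_measurable borel"
    using measurable_comp[OF borel_measurable_continuous_onI[of "\<lambda>w::'b. (\<omega>, w)"] X_meas]
    by (simp add: o_def continuous_intros)
  show ?thesis
    using qs_ess_sup_le_SUP_qs_supp[OF Ps section_meas]
      SUP_qs_supp_le_qs_ess_sup[OF Ps section_meas h_lsc]
    by (rule antisym)
qed

end
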